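(* For $0\le\alpha<1$, $R_{\mathcal{S}^*_{Ne}}(\mathcal{S}^*(\alpha))=\dfrac{2}{3(1-2\alpha)+5}$, and this is sharp for the function $k_\alpha(z)=z(1-z)^{2\alpha-2}$.
   Context: $\mathbb{D}=\{|z|<1\}$, $\mathbb{D}_r=\{|z|<r\}$. $\mathcal{A}$ is the class of analytic $f$ on $\mathbb{D}$ with $f(0)=0$, $f'(0)=1$; for $f\in\mathcal{A}$ let $\mathcal{Q}_f(z)=zf'(z)/f(z)$. For analytic $F,G$ on $\mathbb{D}$, $F\prec G$ means $F=G\circ w$ for some analytic $w:\mathbb{D}\to\mathbb{D}$ with $w(0)=0$. For analytic $\varphi$ on $\mathbb{D}$, $\mathcal{S}^*(\varphi)=\{f\in\mathcal{A}:\mathcal{Q}_f\prec\varphi\}$. Let $\varphi_{Ne}(z)=1+z-z^3/3$ (univalent on $\mathbb{D}$), $\Omega_{Ne}=\varphi_{Ne}(\mathbb{D})$, and $\mathcal{S}^*_{Ne}=\mathcal{S}^*(\varphi_{Ne})$. For $\mathcal{G}\subset\mathcal{A}$, the $\mathcal{S}^*_{Ne}$-radius $R_{\mathcal{S}^*_{Ne}}(\mathcal{G})$ is the largest $\rho\in(0,1]$ such that $\mathcal{Q}_f(\mathbb{D}_\rho)\subseteq\Omega_{Ne}$ for all $f\in\mathcal{G}$ (equivalently $r^{-1}f(rz)\in\mathcal{S}^*_{Ne}$ for all $f\in\mathcal{G}$, $0<r\le\rho$). $\mathcal{S}^*(\alpha)=\{f\in\mathcal{A}:\mathrm{Re}\,\mathcal{Q}_f(z)>\alpha,\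 z\in\mathbb{D}\}$. Sharpness means $k_\alpha\in\mathcal{S}^*(\alpha)$ and $\mathcal{Q}_{k_\alpha}(\partial\mathbb{D}_\rho)$ meets $\partial\Omega_{Ne}$ for $\rho$ the stated radius. *)

theory Defs
  imports "HOL-Analysis.Analysis"
begin

definition classA :: "(complex \<Rightarrow> complex) set" where
  "classA = {f. f holomorphic_on ball 0 1 \<and> f 0 = 0 \<and> deriv f 0 = 1}"

text \<open>Q_f(z) = z f'(z)/f(z), with its removable value Q_f(0) = 1.\<close>
definition Qf :: "(complex \<Rightarrow> complex) \<Rightarrow> complex \<Rightarrow> complex" where
  "Qf f z = (if z = 0 then 1 else z * deriv f z / f z)"

definition phiNe :: "complex \<Rightarrow> complex" where
  "phiNe z = 1 + z - z ^ 3 / 3"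

definition OmegaNe :: "complex set" where
  "OmegaNe = phiNe ` ball 0 1"

text \<open>Starlike functions of order alpha (f nonvanishing off 0 so that Q_f is defined).\<close>
definition starlike_order :: "real \<Rightarrow> (complex \<Rightarrow> complex) set" where
  "starlike_order \<alpha> = {f \<in> classA. (\<forall>z\<in>ball 0 1. z \<noteq> 0 \<longrightarrow> f z \<noteq> 0)
                          \<and> (\<forall>z\<in>ball 0 1. Re (Qf f z) > \<alpha>)}"

text \<open>Admissible radii for the S*_Ne-radius of a class G; the radius is the greatest one.\<close>
definition NeRadii :: "(complex \<Rightarrow> complex) set \<Rightarrow> real set" where
  "NeRadii G = {\<rho>. 0 < \<rho> \<and> \<rho> \<le> 1 \<and> (\<forall>f\<in>G. Qf f ` ball 0 \<rho> \<subseteq> OmegaNe)}"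

definition k_ext :: "real \<Rightarrow> complex \<Rightarrow> complex" where
  "k_ext \<alpha> z = z * (1 - z) powr (of_real (2 * \<alpha> - 2))"

end

theory Submission
  imports Defs "HOL-Complex_Analysis.Complex_Analysis"
begin

text \<open>
  If \<open>Re p > \<alpha>\<close> on the disc and \<open>p 0 = 1\<close>, then \<open>(p - 1)/(p + 1 - 2\<alpha>)\<close> is a self-map of
  the disc fixing \<open>0\<close>, so the Schwarz lemma gives
  \<open>\<bar>p z - 1\<bar> \<le> (2 - 2\<alpha>)\<bar>z\<bar>/(1 - \<bar>z\<bar>)\<close>. Applied to \<open>p = Q\<^sub>f\<close>, this places \<open>Q\<^sub>f(z)\<close> in the
  disc of radius \<open>2/3\<close> about \<open>1\<close> as long as \<open>\<bar>z\<bar> < 2/(8 - 6\<alpha>)\<close>, and that disc lies in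
  \<open>\<Omega>\<^sub>N\<^sub>e\<close> because \<open>1 + w - w\<^sup>3/3 = q\<close> can be solved by a contraction argument.
  For \<open>k\<^sub>\<alpha>\<close> one has \<open>Q(z) = 1 + (2 - 2\<alpha>) z/(1 - z)\<close>, which takes the value \<open>5/3\<close> at the
  radius; \<open>5/3 = \<phi>\<^sub>N\<^sub>e(1)\<close> is a boundary point of \<open>\<Omega>\<^sub>N\<^sub>e\<close>, so the radius cannot be enlarged.
\<close>

lemma cubic_fixed_point:
  fixes c :: complex
  assumes "cmod c + s ^ 3 / 3 \<le> s" "0 \<le> s" "s < 1"
  shows "\<exists>z. cmod z \<le> s \<and> c + z ^ 3 / 3 = z"
proof -
  define T where "T z = c + z ^ 3 / 3" for z :: complex
  have "\<exists>!z. z \<in> cball 0 s \<and> T z = z"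
  proof (rule Banach_fix[where c = "s\<^sup>2"])
    show "complete (cball (0::complex) s)" by (simp add: complete_eq_closed)
    show "cball (0::complex) s \<noteq> {}" using assms by simp
    show "0 \<le> s\<^sup>2" by simp
    show "s\<^sup>2 < 1" using assms by (simp add: abs_square_less_1)
    show "T ` cball 0 s \<subseteq> cball 0 s"
    proof clarify
      fix z :: complex assume "z \<in> cball 0 s"
      then have "cmod (z ^ 3 / 3) \<le> s ^ 3 / 3"
        by (simp add: norm_power power_mono)
      then have "cmod (T z) \<le> cmod c + s ^ 3 / 3"
        unfolding T_def by (meson add_mono norm_triangle_le order_refl)
      then show "T z \<in> cball 0 s" using assms(1) by simp
    qed
    fix x y :: complex assume "x \<in> cball 0 s" "y \<in> cball 0 s"
    then have xy: "cmod x \<le> s" "cmod y \<le> s" by auto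
    have "cmod (x\<^sup>2 + x * y + y\<^sup>2) \<le> cmod (x\<^sup>2) + cmod (x * y) + cmod (y\<^sup>2)"
      by (meson add_mono norm_triangle_ineq order_refl order_trans)
    also have "\<dots> = cmod x * cmod x + cmod x * cmod y + cmod y * cmod y"
      by (simp add: norm_mult power2_eq_square)
    also have "\<dots> \<le> s * s + s * s + s * s"
      using xy assms(2) by (intro add_mono mult_mono) auto
    finally have "cmod ((x\<^sup>2 + x * y + y\<^sup>2) / 3) \<le> s\<^sup>2" by (simp add: power2_eq_square)
    moreover have "T x - T y = (x - y) * ((x\<^sup>2 + x * y + y\<^sup>2) / 3)"
      by (simp add: T_def power2_eq_square power3_eq_cube algebra_simps)
    then have "dist (T x) (T y) = dist x y * cmod ((x\<^sup>2 + x * y + y\<^sup>2) / 3)"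
      by (simp only: dist_norm norm_mult)
    ultimately show "dist (T x) (T y) \<le> s\<^sup>2 * dist x y"
      by (metis mult.commute mult_left_mono zero_le_dist)
  qed
  then show ?thesis unfolding T_def by auto
qed

lemma ball_subset_OmegaNe: "ball 1 (2/3) \<subseteq> OmegaNe"
proof
  fix q :: complex assume "q \<in> ball 1 (2/3)"
  then have m: "cmod (q - 1) < 2/3" by (simp add: dist_norm norm_minus_commute)
  define \<delta> where "\<delta> = min 1 (sqrt (2/3 - cmod (q - 1)))"
  have \<delta>: "0 < \<delta>" "\<delta> \<le> 1" "\<delta>\<^sup>2 \<le> 2/3 - cmod (q - 1)"
    using m by (auto simp: \<delta>_def min_def power_mono_iff)
  have "(1 - \<delta>) ^ 3 = 1 - 3 * \<delta> + 3 * \<delta>\<^sup>2 - \<delta> ^ 3"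
    by (simp add: power2_eq_square power3_eq_cube algebra_simps)
  moreover have "0 \<le> \<delta> ^ 3" using \<delta> by simp
  ultimately have "cmod (q - 1) + (1 - \<delta>) ^ 3 / 3 \<le> 1 - \<delta>"
    using \<delta>(3) by linarith
  then obtain z where z: "cmod z \<le> 1 - \<delta>" "(q - 1) + z ^ 3 / 3 = z"
    using cubic_fixed_point[of "q - 1" "1 - \<delta>"] \<delta> by auto
  have "phiNe z = q" using z(2) by (simp add: phiNe_def algebra_simps)
  moreover have "z \<in> ball 0 1" using z(1) \<delta> by simp
  ultimately show "q \<in> OmegaNe" unfolding OmegaNe_def by blast
qed

lemma OmegaNe_real_less_five_thirds:
  assumes "q \<in> OmegaNe" "Im q = 0"
  shows "Re q < 5/3"
proof -
  obtain z where z: "cmod z < 1" "q = phiNe z" using assms(1) unfolding OmegaNe_def by auto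
  define a b where "a = Re z" and "b = Im z"
  have ab: "a\<^sup>2 + b\<^sup>2 < 1" using z(1) unfolding a_def b_def cmod_def
    by (metis real_sqrt_less_iff real_sqrt_one)
  have "Im q = b * (1 - a\<^sup>2 + b\<^sup>2 / 3)"
    unfolding z a_def b_def phiNe_def by (simp add: power3_eq_cube power2_eq_square field_simps)
  moreover have "1 - a\<^sup>2 + b\<^sup>2 / 3 > 0" using ab zero_le_power2[of b] by linarith
  ultimately have "b = 0" using assms(2) by simp
  then have "Re q = 1 + a - a ^ 3 / 3" and "\<bar>a\<bar> < 1"
    using ab unfolding z a_def b_def phiNe_def
    by (simp_all add: power3_eq_cube algebra_simps abs_square_less_1)
  moreover have "(a - 1)\<^sup>2 * (a + 2) > 0" using \<open>\<bar>a\<bar> < 1\<close> by simp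
  ultimately show ?thesis by (simp add: power2_eq_square power3_eq_cube algebra_simps)
qed

lemma five_thirds_in_frontier_OmegaNe: "of_real (5/3) \<in> frontier OmegaNe"
proof -
  have "continuous_on (closure (ball 0 1)) phiNe"
    unfolding phiNe_def by (intro continuous_intros) auto
  then have "phiNe ` closure (ball 0 1) \<subseteq> closure OmegaNe"
    using closure_subset[of OmegaNe] by (intro image_closure_subset) (auto simp: OmegaNe_def)
  moreover have "phiNe 1 = of_real (5/3)" by (simp add: phiNe_def)
  ultimately have "of_real (5/3) \<in> closure OmegaNe" by force
  moreover have "of_real (5/3) \<notin> interior OmegaNe"
    using OmegaNe_real_less_five_thirds[of "of_real (5/3)"] interior_subset by force
  ultimately show ?thesis by (simp add: frontier_def)
qed

lemma tendsto_Qf_zero: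
  assumes "f holomorphic_on S" "open S" "0 \<in> S" "f 0 = 0" "deriv f 0 = 1"
  shows "(Qf f \<longlongrightarrow> 1) (at 0)"
proof -
  have "(f has_field_derivative 1) (at 0)"
    using assms by (metis DERIV_deriv_iff_field_differentiable holomorphic_on_imp_differentiable_at)
  then have quotient: "((\<lambda>z. f z / z) \<longlongrightarrow> 1) (at 0)"
    using assms(4) by (simp add: has_field_derivative_iff)
  have "isCont (deriv f) 0"
    using assms by (metis holomorphic_deriv holomorphic_on_imp_continuous_on
        continuous_on_eq_continuous_at)
  then have "(deriv f \<longlongrightarrow> 1) (at 0)" using assms(5) by (simp add: isCont_def)
  then have "((\<lambda>z. deriv f z / (f z / z)) \<longlongrightarrow> 1) (at 0)"
    using tendsto_divide[OF _ quotient] by fastforce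
  moreover have "\<forall>\<^sub>F z in at 0. deriv f z / (f z / z) = Qf f z"
    by (auto simp: Qf_def eventually_at_filter)
  ultimately show ?thesis by (rule Lim_transform_eventually)
qed

lemma Qf_holomorphic:
  assumes "f \<in> classA" and nonzero: "\<And>z. z \<in> ball 0 1 \<Longrightarrow> z \<noteq> 0 \<Longrightarrow> f z \<noteq> 0"
  shows "Qf f holomorphic_on ball 0 1"
proof (rule no_isolated_singularity[where K = "{0}"])
  have f: "f holomorphic_on ball 0 1" "f 0 = 0" "deriv f 0 = 1"
    using assms(1) by (auto simp: classA_def)
  have "(\<lambda>z. z * deriv f z / f z) holomorphic_on ball 0 1 - {0}"
    using nonzero f(1) by (intro holomorphic_intros holomorphic_on_subset[OF holomorphic_deriv]) auto
  then show off_zero: "Qf f holomorphic_on ball 0 1 - {0}"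
    by (rule holomorphic_transform) (auto simp: Qf_def)
  have "isCont (Qf f) z" if "z \<in> ball 0 1" for z
  proof (cases "z = 0")
    case True
    then show ?thesis using tendsto_Qf_zero[OF f(1) _ _ f(2,3)] by (simp add: isCont_def Qf_def)
  next
    case False
    then show ?thesis using off_zero that
      by (meson Diff_iff field_differentiable_imp_continuous_at holomorphic_on_imp_differentiable_at
          open_ball open_delete singletonD)
  qed
  then show "continuous_on (ball 0 1) (Qf f)" by (simp add: continuous_on_eq_continuous_at)
qed auto

lemma norm_diff_one_less_of_Re_gt:
  fixes q :: complex
  assumes "\<alpha> < 1" "Re q > \<alpha>"
  shows "cmod (q - 1) < cmod (q + 1 - 2 * of_real \<alpha>)"
proof (rule power_less_imp_less_base[where n = 2])
  have "(Re q + 1 - 2 * \<alpha>)\<^sup>2 - (Re q - 1)\<^sup>2 = (2 - 2 * \<alpha>) * (2 * Re q - 2 * \<alpha>)"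
    by (simp add: power2_eq_square algebra_simps)
  moreover have "(2 - 2 * \<alpha>) * (2 * Re q - 2 * \<alpha>) > 0" using assms by simp
  ultimately show "(cmod (q - 1))\<^sup>2 < (cmod (q + 1 - 2 * of_real \<alpha>))\<^sup>2"
    by (simp add: cmod_power2)
qed simp

lemma Re_gt_norm_diff_one_bound:
  fixes p :: "complex \<Rightarrow> complex"
  assumes "p holomorphic_on ball 0 1" "p 0 = 1" "\<alpha> < 1"
    and Re_gt: "\<And>u. u \<in> ball 0 1 \<Longrightarrow> Re (p u) > \<alpha>" and "cmod z < 1"
  shows "cmod (p z - 1) * (1 - cmod z) \<le> (2 - 2 * \<alpha>) * cmod z"
proof -
  define w where "w u = (p u - 1) / (p u + 1 - 2 * of_real \<alpha>)" for u
  have denom: "p u + 1 - 2 * of_real \<alpha> \<noteq> 0" if "u \<in> ball 0 1" for u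
  proof -
    have "Re (p u + 1 - 2 * of_real \<alpha>) > 0" using Re_gt[OF that] assms(3) by simp
    then show ?thesis by (metis zero_complex.sel(1) less_irrefl)
  qed
  have "w holomorphic_on ball 0 1" unfolding w_def using denom by (intro holomorphic_intros assms(1))
  moreover have "w 0 = 0" by (simp add: w_def assms(2))
  moreover have "cmod (w u) < 1" if "cmod u < 1" for u
    using norm_diff_one_less_of_Re_gt[OF assms(3) Re_gt] denom that
    by (simp add: w_def norm_divide divide_less_eq)
  ultimately have wz: "cmod (w z) \<le> cmod z" by (rule Schwarz_Lemma(1)[OF _ _ _ assms(5)])
  have "w z * (p z + 1 - 2 * of_real \<alpha>) = p z - 1"
    using denom[of z] assms(5) by (simp add: w_def)
  then have "(p z - 1) * (1 - w z) = of_real (2 - 2 * \<alpha>) * w z"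
    by (simp add: algebra_simps)
  moreover have "cmod (of_real (2 - 2 * \<alpha>)) = 2 - 2 * \<alpha>"
    using assms(3) by (simp only: norm_of_real abs_of_pos diff_gt_0_iff_gt)
  ultimately have eq: "cmod (p z - 1) * cmod (1 - w z) = (2 - 2 * \<alpha>) * cmod (w z)"
    by (metis norm_mult)
  have "1 - cmod (w z) \<le> cmod (1 - w z)" by (metis norm_one norm_triangle_ineq2)
  then have "1 - cmod z \<le> cmod (1 - w z)" using wz by linarith
  then have "cmod (p z - 1) * (1 - cmod z) \<le> cmod (p z - 1) * cmod (1 - w z)"
    by (simp add: mult_left_mono)
  also have "\<dots> \<le> (2 - 2 * \<alpha>) * cmod z"
    unfolding eq using wz assms(3) by (simp add: mult_left_mono)
  finally show ?thesis .
qed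

lemma starlike_order_Qf_in_OmegaNe:
  assumes "\<alpha> < 1" "f \<in> starlike_order \<alpha>" "cmod z < 2 / (8 - 6 * \<alpha>)"
  shows "Qf f z \<in> OmegaNe"
proof -
  have f: "f \<in> classA" "\<And>u. u \<in> ball 0 1 \<Longrightarrow> u \<noteq> 0 \<Longrightarrow> f u \<noteq> 0"
    "\<And>u. u \<in> ball 0 1 \<Longrightarrow> Re (Qf f u) > \<alpha>"
    using assms(2) by (auto simp: starlike_order_def)
  have "2 / (8 - 6 * \<alpha>) < 1" using assms(1) by (simp add: divide_less_eq)
  then have z: "cmod z < 1" using assms(3) by linarith
  have bound: "cmod (Qf f z - 1) * (1 - cmod z) \<le> (2 - 2 * \<alpha>) * cmod z"
    using Re_gt_norm_diff_one_bound[OF Qf_holomorphic[OF f(1,2)] _ assms(1) f(3) z]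
    by (simp add: Qf_def)
  have "(2 - 2 * \<alpha>) * cmod z < 2/3 * (1 - cmod z)"
    using assms(1,3) by (simp add: field_simps)
  with bound have "cmod (Qf f z - 1) * (1 - cmod z) < 2/3 * (1 - cmod z)" by linarith
  then have "cmod (Qf f z - 1) < 2/3"
    by (rule mult_right_less_imp_less) (use z in simp)
  then show ?thesis using ball_subset_OmegaNe by (auto simp: dist_norm norm_minus_commute)
qed

lemma one_minus_notin_nonpos_Reals:
  assumes "cmod (z::complex) < 1"
  shows "1 - z \<notin> \<real>\<^sub>\<le>\<^sub>0"
proof
  assume "1 - z \<in> \<real>\<^sub>\<le>\<^sub>0"
  then obtain r where "1 - z = of_real r" "r \<le> 0" by (auto simp: nonpos_Reals_def)
  then have "Re (1 - z) = r" by (metis Re_complex_of_real)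
  then have "Re z \<ge> 1" using \<open>r \<le> 0\<close> by simp
  then show False using assms abs_Re_le_cmod[of z] by linarith
qed

lemma k_ext_has_field_derivative:
  fixes \<alpha> :: real
  defines "a \<equiv> of_real (2 * \<alpha> - 2) :: complex"
  assumes "cmod z < 1"
  shows "(k_ext \<alpha> has_field_derivative (1 - z) powr a - z * (a * (1 - z) powr (a - 1))) (at z)"
proof -
  have "((\<lambda>w. w powr a) has_field_derivative a * (1 - z) powr (a - 1)) (at (1 - z))"
    by (rule has_field_derivative_powr[OF one_minus_notin_nonpos_Reals[OF assms(2)]])
  from DERIV_chain2[OF this DERIV_diff[OF DERIV_const DERIV_ident]]
  have "((\<lambda>z. (1 - z) powr a) has_field_derivative a * (1 - z) powr (a - 1) * (- 1)) (at z)"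
    by simp
  from DERIV_mult[OF DERIV_ident this] show ?thesis
    unfolding k_ext_def a_def by (simp add: algebra_simps)
qed

lemma Qf_k_ext:
  assumes "cmod z < 1"
  shows "Qf (k_ext \<alpha>) z = 1 + of_real (2 - 2 * \<alpha>) * z / (1 - z)"
proof (cases "z = 0")
  case False
  define a :: complex where "a = of_real (2 * \<alpha> - 2)"
  have "1 - z \<noteq> 0" using assms by auto
  then have "(1 - z) powr (a - 1) = (1 - z) powr a / (1 - z)" and "(1 - z) powr a \<noteq> 0"
    by (simp_all add: powr_def exp_diff left_diff_distrib)
  moreover have "deriv (k_ext \<alpha>) z = (1 - z) powr a - z * (a * (1 - z) powr (a - 1))"
    using DERIV_imp_deriv[OF k_ext_has_field_derivative[OF assms]] by (simp add: a_def)
  ultimately show ?thesis using False \<open>1 - z \<noteq> 0\<close>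
    unfolding Qf_def k_ext_def by (simp add: a_def field_simps)
qed (simp add: Qf_def)

lemma Re_divide_one_minus_gt:
  assumes "cmod z < 1"
  shows "Re (z / (1 - z)) > - 1/2"
proof -
  have n: "(Re z)\<^sup>2 + (Im z)\<^sup>2 < 1" using assms by (simp add: cmod_def)
  then have "Re z < 1" using abs_square_less_1[of "Re z"] zero_le_power2[of "Im z"] by auto
  then have d: "(1 - Re z)\<^sup>2 + (Im z)\<^sup>2 > 0" by (simp add: add_pos_nonneg)
  have "Re (z / (1 - z)) = (Re z - (Re z)\<^sup>2 - (Im z)\<^sup>2) / ((1 - Re z)\<^sup>2 + (Im z)\<^sup>2)"
    by (simp add: Re_divide power2_eq_square algebra_simps)
  moreover have "Re z - (Re z)\<^sup>2 - (Im z)\<^sup>2 > - ((1 - Re z)\<^sup>2 + (Im z)\<^sup>2) / 2"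
    using n by (simp add: power2_eq_square field_simps)
  ultimately show ?thesis using d by (simp add: field_simps)
qed

lemma k_ext_in_starlike_order:
  assumes "\<alpha> < 1"
  shows "k_ext \<alpha> \<in> starlike_order \<alpha>"
proof -
  have "k_ext \<alpha> holomorphic_on ball 0 1"
    unfolding holomorphic_on_open[OF open_ball] by (metis k_ext_has_field_derivative mem_ball_0)
  moreover have "deriv (k_ext \<alpha>) 0 = 1"
    using DERIV_imp_deriv[OF k_ext_has_field_derivative[of 0]] by simp
  moreover have "Re (Qf (k_ext \<alpha>) z) > \<alpha>" if "z \<in> ball 0 1" for z
  proof -
    have "Re (Qf (k_ext \<alpha>) z) = 1 + (2 - 2 * \<alpha>) * Re (z / (1 - z))"
      using Qf_k_ext[of z \<alpha>] that by (simp add: times_divide_eq_right[symmetric] del: times_divide_eq_right)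
    moreover have "(2 - 2 * \<alpha>) * Re (z / (1 - z)) > (2 - 2 * \<alpha>) * (- 1/2)"
      using assms Re_divide_one_minus_gt[of z] that by (intro mult_strict_left_mono) auto
    moreover have "(2 - 2 * \<alpha>) * (- 1/2) = \<alpha> - 1" by (simp add: field_simps)
    ultimately show ?thesis by linarith
  qed
  ultimately show ?thesis
    by (auto simp: starlike_order_def classA_def k_ext_def powr_def)
qed

lemma Qf_k_ext_at_radius:
  assumes "\<alpha> < 1"
  shows "Qf (k_ext \<alpha>) (of_real (2 / (8 - 6 * \<alpha>))) = of_real (5/3)"
proof -
  define r where "r = 2 / (8 - 6 * \<alpha>)"
  have r: "0 < r" "r < 1" "r * (8 - 6 * \<alpha>) = 2" using assms by (simp_all add: r_def divide_simps)
  have "(2 - 2 * \<alpha>) * r = 2/3 * (1 - r)" using r(3) by (simp add: algebra_simps)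
  then have at_r: "1 + (2 - 2 * \<alpha>) * r / (1 - r) = 5/3" using r(2) by (simp add: field_simps)
  have "Qf (k_ext \<alpha>) (of_real r) = of_real (1 + (2 - 2 * \<alpha>) * r / (1 - r))"
    using Qf_k_ext[of "of_real r" \<alpha>] r(1,2) by simp
  also have "\<dots> = of_real (5/3)" by (simp only: at_r)
  finally show ?thesis unfolding r_def .
qed

theorem mainTheorem3:
  fixes \<alpha> :: real
  assumes "0 \<le> \<alpha>" and "\<alpha> < 1"
  shows "2 / (3 * (1 - 2 * \<alpha>) + 5) \<in> NeRadii (starlike_order \<alpha>)
       \<and> (\<forall>\<rho>\<in>NeRadii (starlike_order \<alpha>). \<rho> \<le> 2 / (3 * (1 - 2 * \<alpha>) + 5))
       \<and> k_ext \<alpha> \<in> starlike_order \<alpha>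
       \<and> (\<exists>z. cmod z = 2 / (3 * (1 - 2 * \<alpha>) + 5) \<and> Qf (k_ext \<alpha>) z \<in> frontier OmegaNe)"
proof -
  define r where "r = 2 / (3 * (1 - 2 * \<alpha>) + 5)"
  have r: "r = 2 / (8 - 6 * \<alpha>)" "0 < r" "r < 1" using assms by (auto simp: r_def field_simps)
  have k: "k_ext \<alpha> \<in> starlike_order \<alpha>" using k_ext_in_starlike_order[OF assms(2)] .
  have Qk: "Qf (k_ext \<alpha>) (of_real r) = of_real (5/3)"
    using Qf_k_ext_at_radius[OF assms(2)] by (simp only: r(1))
  have "r \<in> NeRadii (starlike_order \<alpha>)"
    using r starlike_order_Qf_in_OmegaNe[OF assms(2)] by (auto simp: NeRadii_def)
  moreover have "\<rho> \<le> r" if "\<rho> \<in> NeRadii (starlike_order \<alpha>)" for \<rho>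
  proof (rule ccontr)
    assume "\<not> \<rho> \<le> r"
    then have "Qf (k_ext \<alpha>) (of_real r) \<in> OmegaNe"
      using that k r(2) by (fastforce simp: NeRadii_def)
    then show False
      using Qk OmegaNe_real_less_five_thirds[of "of_real (5/3)"] by simp
  qed
  moreover have "cmod (of_real r) = r" using r(2) by simp
  ultimately show ?thesis
    using k Qk five_thirds_in_frontier_OmegaNe unfolding r_def by metis
qed

end
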